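(* Let $\mathcal{I},\mathcal{J}$ be finite index sets, let $U_i>0$ ($i\in\mathcal{I}$) be bandwidths and $d_j\ge1$ ($j\in\mathcal{J}$) integer memory sizes, and let $\alpha_{ij}\ge0$ with $\sum_{i,j}\alpha_{ij}=1$. Let $C=\{1,\dots,m\}$ and $\bar\lambda_c>0$ for $c\in C$, $\bar\lambda=\sum_{c}\bar\lambda_c$, and $\rho=\bar\lambda/\sum_{i,j}\alpha_{ij}U_i$. For each $n$, consider the instance with $n$ servers, of which a fraction $\alpha_{ij}$ have bandwidth $U_i$ and memory size $d_j$, and content popularities $\lambda_c=n\bar\lambda_c$, and apply to it the \texttt{greedy} allocation algorithm: initialize $\mathsf{flow}(s)=U_s$, $\mathsf{deg}(s)=d_s$, $\mathsf{flow}(c)=\lambda_c$, $a_{sc}=0$; while some $(s,c)$ has $\mathsf{flow}(s)\mathsf{deg}(s)\mathsf{flow}(c)>0$, choose $s^*\in\arg\max_{s:\mathsf{deg}(s)>0}\mathsf{flow}(s)$, $c^*\in\arg\max_c\mathsf{flow}(c)$, let $f=\min(\mathsf{flow}(s^* ),\mathsf{flow}(c^* ))$, decrease $\mathsf{flow}(s^* )$ and $\mathsf{flow}(c^* )$ by $f$, decrease $\mathsf{deg}(s^* )$ by 1, and set $a_{s^*c^*}=1$. For $K\subseteq C$ let $q^{(n)}_{ijK}$ be the fraction of servers with bandwidth $U_i$ and memory size $d_j$ whose cache contents $\{c:a_{sc}=1\}$ equal $K$, let $q_{ijK}=\lim_n q^{(n)}_{ijK}$, write $q_{ijc}$ for $q_{ij\{c\}}$,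 and let $\theta_c=\sum_{i\in\mathcal{I},j\in\mathcal{J}}\alpha_{ij}U_iq_{ijc}$. Then $q_{ijK}=0$ for all $K$ with $|K|\ge2$. Furthermore, if $\rho\le1$ then $\theta_c=\bar\lambda_c$ for all $c\in C$. If $\rho>1$, the popularities are ordered as $\bar\lambda_1>\bar\lambda_2>\dots>\bar\lambda_m>0$, and $c^*\in\{1,\dots,m\}$ is such that \[ \frac{\bar\lambda}{\rho}\in\Big(\sum_{c'=1}^{c^*-1}\bar\lambda_{c'}-(c^*-1)\bar\lambda_{c^*},\ \sum_{c'=1}^{c^*}\bar\lambda_{c'}-c^*\bar\lambda_{c^*+1}\Big] \] (with the convention $\bar\lambda_{m+1}=0$), then \[ \theta_c=\begin{cases}\bar\lambda_c-\frac{1}{c^*}\Big[\sum_{c'=1}^{c^*}\bar\lambda_{c'}-\frac{\bar\lambda}{\rho}\Big], & 1\le c\le c^*,\\ 0, & c^*+1\le c\le m.\end{cases} \]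
   Context: A server with bandwidth $U$ can serve $U$ requests simultaneously; a server with memory size $d$ can store at most $d$ contents. $\bar\lambda/\rho=\sum_{i,j}\alpha_{ij}U_i$ is the per-server total bandwidth. The number $n\alpha_{ij}$ of servers of each type is assumed integral. *)

theory Defs
  imports "HOL-Analysis.Analysis"
begin

text \<open>State of the greedy algorithm: (flow of servers, remaining degree of servers,
  flow of contents, allocation set of pairs (s,c) with a_sc = 1).
  Servers are 0..<n, contents are 1..m.\<close>
type_synonym gstate = "(nat \<Rightarrow> real) \<times> (nat \<Rightarrow> nat) \<times> (nat \<Rightarrow> real) \<times> (nat \<times> nat) set"

definition greedy_guard :: "nat \<Rightarrow> nat \<Rightarrow> gstate \<Rightarrow> bool" where
  "greedy_guard n m st = (case st of (fs, ds, fc, a) \<Rightarrow>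
     (\<exists>s<n. \<exists>c\<in>{1..m}. fs s * real (ds s) * fc c > 0))"

definition greedy_step :: "nat \<Rightarrow> nat \<Rightarrow> gstate \<Rightarrow> gstate \<Rightarrow> bool" where
  "greedy_step n m st st' = (case st of (fs, ds, fc, a) \<Rightarrow>
     greedy_guard n m st \<and>
     (\<exists>s c. s < n \<and> ds s > 0 \<and> (\<forall>s'<n. ds s' > 0 \<longrightarrow> fs s' \<le> fs s) \<and>
            c \<in> {1..m} \<and> (\<forall>c'\<in>{1..m}. fc c' \<le> fc c) \<and>
            (let f = min (fs s) (fc c) in
              st' = (fs(s := fs s - f), ds(s := ds s - 1), fc(c := fc c - f), insert (s, c) a))))"

definition greedy_output :: "nat \<Rightarrow> nat \<Rightarrow> (nat \<Rightarrow> real) \<Rightarrow> (nat \<Rightarrow> nat) \<Rightarrow> (nat \<Rightarrow> real)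
    \<Rightarrow> (nat \<times> nat) set \<Rightarrow> bool" where
  "greedy_output n m Us ds lam a = (\<exists>st. (greedy_step n m)\<^sup>*\<^sup>* (Us, ds, lam, {}) st \<and>
      \<not> greedy_guard n m st \<and> a = snd (snd (snd st)))"

definition cache_frac :: "('i \<Rightarrow> 'j \<Rightarrow> real) \<Rightarrow> (nat \<Rightarrow> 'i \<times> 'j) \<Rightarrow> (nat \<times> nat) set \<Rightarrow> nat
    \<Rightarrow> 'i \<Rightarrow> 'j \<Rightarrow> nat set \<Rightarrow> real" where
  "cache_frac \<alpha> tp a n i j K =
     real (card {s. s < n \<and> tp s = (i, j) \<and> {c. (s, c) \<in> a} = K}) / (real n * \<alpha> i j)"

end

theory Submission
  imports Defs
begin

text \<open>
  Two invariants of the greedy run carry the proof. Call a server exceptional if it is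
  partially used or stores at least two contents. Every step exhausts either the chosen
  content or the chosen server, so the number of exceptional servers plus the number of
  contents with residual demand never exceeds m. Hence only O(1) servers store more than one
  content (so q vanishes on sets of size at least 2), and the bandwidth of the servers storing
  exactly {c} equals the demand served for c up to O(1). Second, greedy always serves a
  content of maximal residual demand, so every content that has been served at all has
  residual within one maximal bandwidth of all others: up to O(1) the residual of c is
  min(n lb c, n L) for a water level L, and L is fixed by the total served demand, which is
  n min(lbar, lbar / \<rho>) up to O(1). Dividing by n gives \<theta> c = max(0, lb c - L) where
  the sum of these over c is min(lbar, lbar / \<rho>); that is, L = 0 if \<rho> \<le> 1, and
  L = (lb 1 + ... + lb c* - lbar / \<rho>) / c* if \<rho> > 1.
\<close>

lemma sum_le_card_support_mult:
  fixes g :: "'a \<Rightarrow> real"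
  assumes "finite A" "finite G" "card G \<le> k" "0 \<le> M"
    and "\<forall>s\<in>A. g s \<le> M" "\<forall>s\<in>A. g s \<noteq> 0 \<longrightarrow> s \<in> G"
  shows "sum g A \<le> real k * M"
proof -
  have "sum g A = sum g (A \<inter> G)"
    by (rule sum.mono_neutral_right) (use assms in auto)
  also have "\<dots> \<le> real (card (A \<inter> G)) * M"
    using assms(5) by (intro sum_bounded_above) auto
  also have "\<dots> \<le> real k * M"
    using assms(2-4) card_mono[of G "A \<inter> G"] by (intro mult_right_mono) auto
  finally show ?thesis .
qed

lemma two_le_card_if_not_singleton:
  assumes "x \<in> X" "X \<noteq> {x}" "finite X"
  shows "2 \<le> card X"
proof -
  obtain y where "y \<in> X" "y \<noteq> x" using assms(1,2) by blast
  with assms have "card {x, y} \<le> card X" by (intro card_mono) auto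
  with \<open>y \<noteq> x\<close> show ?thesis by simp
qed

lemma Rats_common_denominator:
  assumes "finite S" "\<forall>x\<in>S. f x \<in> \<rat>"
  shows "\<exists>D::nat. 0 < D \<and> (\<forall>x\<in>S. real D * f x \<in> \<int>)"
  using assms
proof (induction S rule: finite_induct)
  case empty show ?case by (intro exI[of _ 1]) simp
next
  case (insert x S)
  then obtain D where D: "0 < D" "\<forall>y\<in>S. real D * f y \<in> \<int>" by auto
  obtain p b where pb: "0 < b" "f x = of_int p / of_int b" using insert.prems Rats_cases' by blast
  have "real (D * nat b) * f y \<in> \<int>" if "y \<in> insert x S" for y
  proof (cases "y = x")
    case True then show ?thesis using pb by simp
  next
    case False
    then have "of_int b * (real D * f y) \<in> \<int>" using D that by simp
    then show ?thesis using pb by (simp add: mult_ac)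
  qed
  with D pb show ?case by (intro exI[of _ "D * nat b"]) simp
qed

lemma sum_by_type:
  fixes g :: "'i \<times> 'j \<Rightarrow> real"
  assumes "finite I" "finite J" "finite A" "\<forall>s\<in>A. tp s \<in> I \<times> J"
  shows "(\<Sum>s\<in>A. g (tp s)) = (\<Sum>i\<in>I. \<Sum>j\<in>J. g (i, j) * real (card {s\<in>A. tp s = (i, j)}))"
proof -
  have "(\<Sum>s\<in>A. g (tp s)) = (\<Sum>p\<in>I \<times> J. \<Sum>s\<in>{s\<in>A. tp s = p}. g (tp s))"
    by (rule sum.group[symmetric]) (use assms in auto)
  also have "\<dots> = (\<Sum>p\<in>I \<times> J. g p * real (card {s\<in>A. tp s = p}))"
    by (intro sum.cong) auto
  finally show ?thesis by (simp add: sum.cartesian_product)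
qed

lemma tendsto_eq_if_dist_le_const_over_n:
  fixes f :: "nat \<Rightarrow> real"
  assumes "F \<noteq> bot" "F \<le> sequentially" "(f \<longlongrightarrow> l) F"
    and "eventually (\<lambda>n. \<bar>f n - t\<bar> \<le> K / real n) F"
  shows "l = t"
proof -
  have "((\<lambda>n. K / real n) \<longlongrightarrow> 0) F" by (rule tendsto_mono[OF assms(2) lim_const_over_n])
  moreover have "eventually (\<lambda>n. norm (f n - t) \<le> K / real n) F" using assms(4) by simp
  ultimately have "((\<lambda>n. f n - t) \<longlongrightarrow> 0) F" by (rule Lim_null_comparison[rotated])
  then have "(f \<longlongrightarrow> t) F" by (simp only: LIM_zero_iff)
  from tendsto_unique[OF assms(1,3) this] show ?thesis .
qed

section \<open>Water filling\<close>

lemma dist_le_sum_excess_diff: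
  fixes a :: "'c \<Rightarrow> real"
  assumes "finite C" "c0 \<in> C" "x \<le> a c0" "y \<le> a c0"
  shows "\<bar>x - y\<bar> \<le> \<bar>(\<Sum>c\<in>C. max 0 (a c - x)) - (\<Sum>c\<in>C. max 0 (a c - y))\<bar>"
proof -
  have "y - x \<le> (\<Sum>c\<in>C. max 0 (a c - x)) - (\<Sum>c\<in>C. max 0 (a c - y))"
    if "x \<le> y" "y \<le> a c0" for x y
  proof -
    have "y - x = max 0 (a c0 - x) - max 0 (a c0 - y)" using that by simp
    also have "\<dots> \<le> (\<Sum>c\<in>C. max 0 (a c - x) - max 0 (a c - y))"
      using assms(1,2) that(1) by (intro member_le_sum) auto
    finally show ?thesis by (simp add: sum_subtractf)
  qed
  from this[of x y] this[of y x] assms(3,4) show ?thesis by (cases "x \<le> y") linarith+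
qed

lemma water_filling_stable:
  fixes a F :: "'c \<Rightarrow> real"
  assumes C: "finite C" "c1 \<in> C" "L \<le> a c1"
    and F: "\<forall>c\<in>C. F c \<le> a c" and balanced: "\<forall>c\<in>C. \<forall>c'\<in>C. F c < a c \<longrightarrow> F c' \<le> F c + u"
    and u: "0 \<le> u"
    and total: "\<bar>(\<Sum>c\<in>C. a c - F c) - (\<Sum>c\<in>C. max 0 (a c - L))\<bar> \<le> E"
  shows "\<forall>c\<in>C. \<bar>F c - min (a c) L\<bar> \<le> real (card C + 1) * u + E"
proof -
  have "Max (a ` C) \<in> a ` C" using C(1,2) by (intro Max_in) auto
  then obtain cmax where "cmax \<in> C" "a cmax = Max (a ` C)" by auto
  moreover have "\<forall>c\<in>C. a c \<le> Max (a ` C)" using C(1) by simp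
  ultimately have cmax: "cmax \<in> C" "\<forall>c\<in>C. a c \<le> a cmax" by simp_all
  txt \<open>The residual of any served content is a water level fitting \<open>F\<close> up to \<open>u\<close>.\<close>
  obtain \<mu> where mu: "\<mu> \<le> a cmax" "\<forall>c\<in>C. \<bar>F c - min (a c) \<mu>\<bar> \<le> u"
  proof (cases "\<exists>c0\<in>C. F c0 < a c0")
    case True
    then obtain c0 where c0: "c0 \<in> C" "F c0 < a c0" by blast
    have "\<bar>F c - min (a c) (F c0)\<bar> \<le> u" if "c \<in> C" for c
    proof -
      have "F c \<le> F c0 + u" "F c < a c \<longrightarrow> F c0 \<le> F c + u" "F c \<le> a c"
        using F balanced c0 that by blast+
      with u show ?thesis unfolding min_def abs_le_iff by auto
    qed
    moreover have "F c0 \<le> a cmax" using c0 cmax by force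
    ultimately show thesis by (intro that) auto
  next
    case False
    then have "\<forall>c\<in>C. F c = a c" using F by force
    then show thesis using cmax u by (intro that[of "a cmax"]) (auto simp: min_def)
  qed
  have "(\<Sum>c\<in>C. a c - F c) - (\<Sum>c\<in>C. max 0 (a c - \<mu>)) = (\<Sum>c\<in>C. min (a c) \<mu> - F c)"
    unfolding sum_subtractf[symmetric] by (rule sum.cong) (auto simp: min_def max_def)
  also have "\<bar>\<dots>\<bar> \<le> (\<Sum>c\<in>C. \<bar>min (a c) \<mu> - F c\<bar>)" by (rule sum_abs)
  also have "\<dots> \<le> real (card C) * u"
    using mu(2) by (intro sum_bounded_above) (simp add: abs_minus_commute)
  finally have "\<bar>(\<Sum>c\<in>C. a c - F c) - (\<Sum>c\<in>C. max 0 (a c - \<mu>))\<bar> \<le> real (card C) * u" .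
  moreover have "\<bar>\<mu> - L\<bar> \<le> \<bar>(\<Sum>c\<in>C. max 0 (a c - \<mu>)) - (\<Sum>c\<in>C. max 0 (a c - L))\<bar>"
    using C cmax mu(1) by (intro dist_le_sum_excess_diff[of C cmax]) force+
  ultimately have "\<bar>\<mu> - L\<bar> \<le> real (card C) * u + E"
    using total by linarith
  moreover have "\<bar>min (a c) \<mu> - min (a c) L\<bar> \<le> \<bar>\<mu> - L\<bar>" for c by (auto simp: min_def)
  ultimately show ?thesis using mu(2) by (force simp: algebra_simps)
qed

lemma water_level_of_bracket:
  fixes lb :: "nat \<Rightarrow> real"
  assumes dec: "\<forall>c\<in>{1..m}. \<forall>c'\<in>{1..m}. c < c' \<longrightarrow> lb c' < lb c" and cs: "cs \<in> {1..m}"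
    and lower: "(\<Sum>c\<in>{1..<cs}. lb c) - real (cs - 1) * lb cs < D"
    and upper: "D \<le> (\<Sum>c\<in>{1..cs}. lb c) - real cs * (if cs + 1 \<le> m then lb (cs + 1) else 0)"
  defines "L \<equiv> ((\<Sum>c\<in>{1..cs}. lb c) - D) / real cs"
  shows "L < lb cs" and "\<forall>c\<in>{1..m}. max 0 (lb c - L) = (if c \<le> cs then lb c - L else 0)"
    and "(\<Sum>c\<in>{1..m}. max 0 (lb c - L)) = D"
proof -
  have cs_pos: "0 < real cs" using cs by simp
  have "(\<Sum>c\<in>{1..cs}. lb c) = (\<Sum>c\<in>{1..<cs}. lb c) + lb cs"
    using cs by (simp add: atLeastLessThanSuc_atLeastAtMost[symmetric] sum.atLeastLessThan_Suc)
  with lower cs have "(\<Sum>c\<in>{1..cs}. lb c) - D < real cs * lb cs"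
    by (simp add: of_nat_diff algebra_simps)
  with cs_pos show L_less: "L < lb cs" unfolding L_def by (simp add: divide_less_eq mult.commute)
  have L_ge: "lb (cs + 1) \<le> L" if "cs + 1 \<le> m"
    using upper that cs_pos unfolding L_def by (simp add: le_divide_eq mult.commute)
  have above: "L < lb c" if "c \<in> {1..m}" "c \<le> cs" for c
  proof (cases "c = cs")
    case False
    then have "lb cs < lb c" using dec that cs by simp
    with L_less show ?thesis by simp
  qed (use L_less in simp)
  have below: "lb c \<le> L" if "c \<in> {1..m}" "\<not> c \<le> cs" for c
  proof (cases "c = cs + 1")
    case False
    then have "lb c < lb (cs + 1)" using dec that cs by simp
    with L_ge that show ?thesis by simp
  qed (use L_ge that in simp)
  show level: "\<forall>c\<in>{1..m}. max 0 (lb c - L) = (if c \<le> cs then lb c - L else 0)"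
    using above below by force
  have "(\<Sum>c\<in>{1..m}. max 0 (lb c - L)) = (\<Sum>c\<in>{1..m}. if c \<le> cs then lb c - L else 0)"
    using level by (intro sum.cong) auto
  also have "\<dots> = (\<Sum>c\<in>{c\<in>{1..m}. c \<le> cs}. lb c - L)" by (rule sum.inter_filter[symmetric]) simp
  also have "{c\<in>{1..m}. c \<le> cs} = {1..cs}" using cs by auto
  also have "(\<Sum>c\<in>{1..cs}. lb c - L) = D" using cs_pos unfolding L_def by (simp add: sum_subtractf)
  finally show "(\<Sum>c\<in>{1..m}. max 0 (lb c - L)) = D" .
qed

section \<open>Invariants of the greedy run\<close>

abbreviation cache :: "(nat \<times> nat) set \<Rightarrow> nat \<Rightarrow> nat set" where
  "cache a s \<equiv> {c. (s, c) \<in> a}"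

definition greedy_bounds :: "nat \<Rightarrow> nat \<Rightarrow> (nat \<Rightarrow> real) \<Rightarrow> (nat \<Rightarrow> nat) \<Rightarrow> (nat \<Rightarrow> real)
    \<Rightarrow> gstate \<Rightarrow> bool" where
  "greedy_bounds n m Us ds0 lam = (\<lambda>(fs, ds, fc, a).
     (\<forall>s<n. 0 \<le> fs s \<and> fs s \<le> Us s) \<and> (\<forall>c\<in>{1..m}. 0 \<le> fc c \<and> fc c \<le> lam c) \<and>
     a \<subseteq> {..<n} \<times> {1..m} \<and> (\<forall>s<n. cache a s = {} \<longrightarrow> fs s = Us s \<and> ds s = ds0 s))"

definition exceptional_servers :: "nat \<Rightarrow> (nat \<Rightarrow> real) \<Rightarrow> (nat \<times> nat) set \<Rightarrow> nat set" where
  "exceptional_servers n fs a =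
     {s. s < n \<and> (0 < fs s \<and> cache a s \<noteq> {} \<or> 2 \<le> card (cache a s))}"

definition open_contents :: "nat \<Rightarrow> (nat \<Rightarrow> real) \<Rightarrow> nat set" where
  "open_contents m fc = {c \<in> {1..m}. 0 < fc c}"

definition residuals_balanced :: "nat \<Rightarrow> (nat \<Rightarrow> real) \<Rightarrow> real \<Rightarrow> (nat \<Rightarrow> real) \<Rightarrow> bool" where
  "residuals_balanced m lam u fc =
     (\<forall>c\<in>{1..m}. \<forall>c'\<in>{1..m}. fc c < lam c \<longrightarrow> fc c' \<le> fc c + u)"

text \<open>\<open>x s c\<close> is the flow the run has sent from server \<open>s\<close> to content \<open>c\<close>.\<close>

definition flow_decomposition :: "nat \<Rightarrow> nat \<Rightarrow> (nat \<Rightarrow> real) \<Rightarrow> (nat \<Rightarrow> real) \<Rightarrow> gstate \<Rightarrow> bool" where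
  "flow_decomposition n m Us lam = (\<lambda>(fs, ds, fc, a). \<exists>x.
     (\<forall>s c. 0 \<le> x s c) \<and> (\<forall>s c. 0 < x s c \<longrightarrow> (s, c) \<in> a) \<and>
     (\<forall>s<n. Us s - fs s = (\<Sum>c\<in>{1..m}. x s c)) \<and> (\<forall>c\<in>{1..m}. lam c - fc c = (\<Sum>s<n. x s c)))"

definition greedy_inv :: "nat \<Rightarrow> nat \<Rightarrow> (nat \<Rightarrow> real) \<Rightarrow> (nat \<Rightarrow> nat) \<Rightarrow> (nat \<Rightarrow> real) \<Rightarrow> real
    \<Rightarrow> gstate \<Rightarrow> bool" where
  "greedy_inv n m Us ds0 lam u st \<longleftrightarrow> greedy_bounds n m Us ds0 lam st \<and>
     (case st of (fs, ds, fc, a) \<Rightarrow>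
        card (exceptional_servers n fs a) + card (open_contents m fc) \<le> m \<and>
        residuals_balanced m lam u fc) \<and>
     flow_decomposition n m Us lam st"

lemma greedy_stepE:
  assumes step: "greedy_step n m (fs, ds, fc, a) st'"
    and fs: "\<forall>s<n. 0 \<le> fs s" and fc: "\<forall>c\<in>{1..m}. 0 \<le> fc c"
  obtains s c f where "s < n" "c \<in> {1..m}" "0 < fs s" "0 < fc c" "\<forall>c'\<in>{1..m}. fc c' \<le> fc c"
    "f = min (fs s) (fc c)"
    "st' = (fs(s := fs s - f), ds(s := ds s - 1), fc(c := fc c - f), insert (s, c) a)"
proof -
  obtain s c where s: "s < n" "\<forall>s'<n. 0 < ds s' \<longrightarrow> fs s' \<le> fs s"
    and c: "c \<in> {1..m}" "\<forall>c'\<in>{1..m}. fc c' \<le> fc c"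
    and st': "st' = (fs(s := fs s - min (fs s) (fc c)), ds(s := ds s - 1),
                      fc(c := fc c - min (fs s) (fc c)), insert (s, c) a)"
    using step unfolding greedy_step_def Let_def by auto
  obtain s0 c0 where "s0 < n" "c0 \<in> {1..m}" "0 < fs s0 * real (ds s0) * fc c0"
    using step unfolding greedy_step_def greedy_guard_def by auto
  moreover from this fs fc have "0 \<le> fs s0" "0 \<le> fc c0" by auto
  ultimately have "0 < fs s0" "0 < ds s0" "0 < fc c0"
    by (auto simp: zero_less_mult_iff)
  moreover have "fs s0 \<le> fs s" "fc c0 \<le> fc c"
    using s c \<open>s0 < n\<close> \<open>c0 \<in> {1..m}\<close> \<open>0 < ds s0\<close> by blast+
  ultimately have "0 < fs s" "0 < fc c" by linarith+
  with s c st' show thesis by (intro that[OF _ _ _ _ _ refl])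
qed

lemma greedy_bounds_step:
  assumes "greedy_bounds n m Us ds0 lam (fs, ds, fc, a)"
    and "s < n" "c \<in> {1..m}" "0 \<le> f" "f \<le> fs s" "f \<le> fc c"
  shows "greedy_bounds n m Us ds0 lam (fs(s := fs s - f), ds(s := ds s - 1), fc(c := fc c - f), insert (s, c) a)"
proof -
  have fs: "\<forall>s<n. 0 \<le> fs s \<and> fs s \<le> Us s" and fc: "\<forall>c\<in>{1..m}. 0 \<le> fc c \<and> fc c \<le> lam c"
    and a: "a \<subseteq> {..<n} \<times> {1..m}" and untouched: "\<forall>s<n. cache a s = {} \<longrightarrow> fs s = Us s \<and> ds s = ds0 s"
    using assms(1) unfolding greedy_bounds_def by simp_all
  have "fs s - f \<le> Us s" using fs assms(2,4) by force
  then have "\<forall>t<n. 0 \<le> (fs(s := fs s - f)) t \<and> (fs(s := fs s - f)) t \<le> Us t"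
    using fs assms(5) by (simp add: fun_upd_def)
  moreover have "fc c - f \<le> lam c" using fc assms(3,4) by force
  then have "\<forall>c'\<in>{1..m}. 0 \<le> (fc(c := fc c - f)) c' \<and> (fc(c := fc c - f)) c' \<le> lam c'"
    using fc assms(6) by (simp add: fun_upd_def)
  moreover have "insert (s, c) a \<subseteq> {..<n} \<times> {1..m}" using a assms(2,3) by blast
  moreover have "\<forall>t<n. cache (insert (s, c) a) t = {} \<longrightarrow>
      (fs(s := fs s - f)) t = Us t \<and> (ds(s := ds s - 1)) t = ds0 t"
    using untouched by auto
  ultimately show ?thesis unfolding greedy_bounds_def by simp
qed

lemma exceptional_servers_step:
  assumes "s < n" "0 < fs s" "0 < fc c" "f = min (fs s) (fc c)"
  shows "exceptional_servers n (fs(s := fs s - f)) (insert (s, c) a)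
           \<subseteq> (if fc c \<le> fs s then insert s (exceptional_servers n fs a) else exceptional_servers n fs a)"
proof
  fix t assume t: "t \<in> exceptional_servers n (fs(s := fs s - f)) (insert (s, c) a)"
  show "t \<in> (if fc c \<le> fs s then insert s (exceptional_servers n fs a) else exceptional_servers n fs a)"
  proof (cases "t = s")
    case True
    show ?thesis
    proof (cases "fc c \<le> fs s")
      case False
      then have "fs s - f = 0" using assms(4) by simp
      moreover have "cache (insert (s, c) a) s = insert c (cache a s)" by auto
      ultimately have "2 \<le> card (insert c (cache a s))"
        using t True unfolding exceptional_servers_def by auto
      then have "cache a s \<noteq> {}" by (cases "cache a s = {}") auto
      with True False assms(1,2) show ?thesis unfolding exceptional_servers_def by auto
    qed (use True in simp)
  qed (use t in \<open>auto simp: exceptional_servers_def\<close>)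
qed

text \<open>A step exhausts the content \<open>c\<close> (which leaves the open contents, while \<open>s\<close> may
  become exceptional) or the server \<open>s\<close> (which is exceptional afterwards only if it
  already was).\<close>

lemma exceptional_count_step:
  assumes count: "card (exceptional_servers n fs a) + card (open_contents m fc) \<le> m"
    and "s < n" "c \<in> {1..m}" "0 < fs s" "0 < fc c" and f: "f = min (fs s) (fc c)"
  shows "card (exceptional_servers n (fs(s := fs s - f)) (insert (s, c) a))
           + card (open_contents m (fc(c := fc c - f))) \<le> m"
proof -
  have fin: "finite (exceptional_servers n fs a)" unfolding exceptional_servers_def by auto
  note sub = exceptional_servers_step[of s n fs fc c f a, OF assms(2,4,5) f]
  show ?thesis
  proof (cases "fc c \<le> fs s")
    case True
    then have "open_contents m (fc(c := fc c - f)) = open_contents m fc - {c}"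
      using f unfolding open_contents_def by auto
    moreover have "c \<in> open_contents m fc" using assms(3,5) unfolding open_contents_def by auto
    moreover have "card (exceptional_servers n (fs(s := fs s - f)) (insert (s, c) a))
        \<le> Suc (card (exceptional_servers n fs a))"
      using card_mono[OF _ sub] True fin by (simp add: card_insert_if split: if_splits)
    ultimately show ?thesis
      using count card_Diff1_less[of "open_contents m fc" c]
      by (simp add: open_contents_def card_Diff_singleton)
  next
    case False
    then have "open_contents m (fc(c := fc c - f)) = open_contents m fc"
      using f assms(5) unfolding open_contents_def by auto
    with False sub fin count show ?thesis by (auto dest: card_mono)
  qed
qed

lemma residuals_balanced_step:
  assumes "residuals_balanced m lam u fc" "c \<in> {1..m}" "\<forall>c'\<in>{1..m}. fc c' \<le> fc c"
    and "0 \<le> f" "f \<le> u"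
  shows "residuals_balanced m lam u (fc(c := fc c - f))"
  unfolding residuals_balanced_def
proof (intro ballI impI)
  fix c1 c2 assume "c1 \<in> {1..m}" "c2 \<in> {1..m}" and "(fc(c := fc c - f)) c1 < lam c1"
  moreover have "(fc(c := fc c - f)) c2 \<le> fc c2" using assms(4) by simp
  ultimately show "(fc(c := fc c - f)) c2 \<le> (fc(c := fc c - f)) c1 + u"
    using assms unfolding residuals_balanced_def by (cases "c1 = c") force+
qed

lemma flow_decomposition_step:
  assumes "flow_decomposition n m Us lam (fs, ds, fc, a)" "s < n" "c \<in> {1..m}" "0 \<le> f"
  shows "flow_decomposition n m Us lam (fs(s := fs s - f), ds', fc(c := fc c - f), insert (s, c) a)"
proof -
  obtain x where x: "\<forall>s c. 0 \<le> x s c" "\<forall>s c. 0 < x s c \<longrightarrow> (s, c) \<in> a"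
    "\<forall>s<n. Us s - fs s = (\<Sum>c\<in>{1..m}. x s c)" "\<forall>c\<in>{1..m}. lam c - fc c = (\<Sum>s<n. x s c)"
    using assms(1) unfolding flow_decomposition_def by auto
  define x' where "x' t c' = x t c' + (if t = s \<and> c' = c then f else 0)" for t c'
  have "\<forall>t<n. Us t - (fs(s := fs s - f)) t = (\<Sum>c'\<in>{1..m}. x' t c')"
    using x(3) assms(3) by (simp add: x'_def sum.distrib)
  moreover have "\<forall>c'\<in>{1..m}. lam c' - (fc(c := fc c - f)) c' = (\<Sum>t<n. x' t c')"
    using x(4) assms(2) by (simp add: x'_def sum.distrib)
  moreover have "\<forall>t c'. 0 \<le> x' t c'" "\<forall>t c'. 0 < x' t c' \<longrightarrow> (t, c') \<in> insert (s, c) a"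
    using x(1,2) assms(4) by (auto simp: x'_def split: if_splits)
  ultimately show ?thesis unfolding flow_decomposition_def by auto
qed

lemma greedy_inv_step:
  assumes inv: "greedy_inv n m Us ds0 lam u st" and step: "greedy_step n m st st'"
    and Us: "\<forall>s<n. Us s \<le> u"
  shows "greedy_inv n m Us ds0 lam u st'"
proof -
  obtain fs ds fc a where st: "st = (fs, ds, fc, a)" by (cases st) auto
  have bounds: "greedy_bounds n m Us ds0 lam (fs, ds, fc, a)"
    using inv st unfolding greedy_inv_def by simp
  then have "\<forall>s<n. 0 \<le> fs s" "\<forall>c\<in>{1..m}. 0 \<le> fc c"
    unfolding greedy_bounds_def by simp_all
  then obtain s c f where sc: "s < n" "c \<in> {1..m}" "0 < fs s" "0 < fc c"
    and cmax: "\<forall>c'\<in>{1..m}. fc c' \<le> fc c" and f: "f = min (fs s) (fc c)"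
    and st': "st' = (fs(s := fs s - f), ds(s := ds s - 1), fc(c := fc c - f), insert (s, c) a)"
    using greedy_stepE step st by metis
  have count: "card (exceptional_servers n fs a) + card (open_contents m fc) \<le> m"
    and balanced: "residuals_balanced m lam u fc"
    and flow: "flow_decomposition n m Us lam (fs, ds, fc, a)"
    using inv st unfolding greedy_inv_def by simp_all
  have f_bounds: "0 \<le> f" "f \<le> fs s" "f \<le> fc c" using f sc by auto
  have "f \<le> u" using f sc(1) Us bounds unfolding greedy_bounds_def by force
  show ?thesis
    unfolding greedy_inv_def st' prod.case
    using greedy_bounds_step[OF bounds sc(1,2) f_bounds] exceptional_count_step[OF count sc f]
      residuals_balanced_step[OF balanced sc(2) cmax f_bounds(1) \<open>f \<le> u\<close>]
      flow_decomposition_step[OF flow sc(1,2) f_bounds(1)]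
    by blast
qed

lemma greedy_inv_init:
  assumes "\<forall>s<n. 0 \<le> Us s" "\<forall>c\<in>{1..m}. 0 \<le> lam c"
  shows "greedy_inv n m Us ds0 lam u (Us, ds0, lam, {})"
proof -
  have "card (open_contents m lam) \<le> card {1..m}"
    by (rule card_mono) (auto simp: open_contents_def)
  moreover have "exceptional_servers n Us {} = {}" by (simp add: exceptional_servers_def)
  moreover have "greedy_bounds n m Us ds0 lam (Us, ds0, lam, {})"
    using assms by (simp add: greedy_bounds_def)
  moreover have "residuals_balanced m lam u lam" by (simp add: residuals_balanced_def)
  moreover have "flow_decomposition n m Us lam (Us, ds0, lam, {})"
    unfolding flow_decomposition_def prod.case by (intro exI[of _ "\<lambda>s c. 0"]) simp
  ultimately show ?thesis unfolding greedy_inv_def by simp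
qed

lemma greedy_output_final_state:
  assumes "greedy_output n m Us ds0 lam a"
    and "\<forall>s<n. 0 \<le> Us s \<and> Us s \<le> u" "\<forall>c\<in>{1..m}. 0 \<le> lam c"
  obtains fs ds fc where "greedy_inv n m Us ds0 lam u (fs, ds, fc, a)"
    "\<not> greedy_guard n m (fs, ds, fc, a)"
proof -
  obtain st where run: "(greedy_step n m)\<^sup>*\<^sup>* (Us, ds0, lam, {}) st"
    and final: "\<not> greedy_guard n m st" and a: "a = snd (snd (snd st))"
    using assms(1) unfolding greedy_output_def by blast
  have "greedy_inv n m Us ds0 lam u st"
    using run
  proof (induction rule: rtranclp_induct)
    case base show ?case using greedy_inv_init assms(2,3) by simp
  next
    case (step st st')
    have "\<forall>s<n. Us s \<le> u" using assms(2) by simp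
    with step.IH step.hyps(2) show ?case by (rule greedy_inv_step)
  qed
  moreover obtain fs ds fc where "st = (fs, ds, fc, a)" using a by (cases st) simp
  ultimately show thesis using final that by simp
qed

section \<open>The greedy allocation at a fixed number of servers\<close>

lemma card_exceptional_servers_le:
  assumes "greedy_inv n m Us ds0 lam u (fs, ds, fc, a)"
  shows "card (exceptional_servers n fs a) \<le> m"
  using assms unfolding greedy_inv_def by simp

lemma card_multi_cache_servers_le:
  assumes "greedy_inv n m Us ds0 lam u (fs, ds, fc, a)"
  shows "card {s. s < n \<and> 2 \<le> card (cache a s)} \<le> m"
proof -
  have "{s. s < n \<and> 2 \<le> card (cache a s)} \<subseteq> exceptional_servers n fs a"
    unfolding exceptional_servers_def by auto
  then have "card {s. s < n \<and> 2 \<le> card (cache a s)} \<le> card (exceptional_servers n fs a)"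
    by (rule card_mono[rotated]) (simp add: exceptional_servers_def)
  with card_exceptional_servers_le[OF assms] show ?thesis by simp
qed

lemma shared_cache_server_exceptional:
  assumes "a \<subseteq> {..<n} \<times> {1..m}" "s < n" "c \<in> cache a s" "cache a s \<noteq> {c}"
  shows "s \<in> exceptional_servers n fs a"
proof -
  have "cache a s \<subseteq> {1..m}" using assms(1) by auto
  then have "finite (cache a s)" by (rule finite_subset) simp
  with assms(3,4) have "2 \<le> card (cache a s)" by (intro two_le_card_if_not_singleton)
  with assms(2) show ?thesis by (simp add: exceptional_servers_def)
qed

lemma served_near_single_cache_load:
  assumes inv: "greedy_inv n m Us ds0 lam u (fs, ds, fc, a)"
    and Us: "\<forall>s<n. Us s \<le> u" and u: "0 \<le> u" and c: "c \<in> {1..m}"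
  shows "\<bar>(lam c - fc c) - (\<Sum>s | s < n \<and> cache a s = {c}. Us s)\<bar> \<le> real m * u"
proof -
  have bounds: "\<forall>s<n. 0 \<le> fs s \<and> fs s \<le> Us s" and a: "a \<subseteq> {..<n} \<times> {1..m}"
    using inv unfolding greedy_inv_def greedy_bounds_def by simp_all
  obtain x where x: "\<forall>s c. 0 \<le> x s c" "\<forall>s c. 0 < x s c \<longrightarrow> (s, c) \<in> a"
    "\<forall>s<n. Us s - fs s = (\<Sum>c\<in>{1..m}. x s c)" "\<forall>c\<in>{1..m}. lam c - fc c = (\<Sum>s<n. x s c)"
    using inv unfolding greedy_inv_def flow_decomposition_def by auto
  have x_in_cache: "c' \<in> cache a s" if "x s c' \<noteq> 0" for s c'
    using x(1,2) that by (simp add: order_less_le)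
  define E where "E = exceptional_servers n fs a"
  have E: "finite E" "card E \<le> m"
    using card_exceptional_servers_le[OF inv] by (auto simp: E_def exceptional_servers_def)
  define S where "S = {s. s < n \<and> cache a s = {c}}"
  define R where "R = {s. s < n \<and> cache a s \<noteq> {c}}"
  have "{..<n} = S \<union> R" "S \<inter> R = {}" "finite S" "finite R" unfolding S_def R_def by auto
  then have "lam c - fc c = (\<Sum>s\<in>S. x s c) + (\<Sum>s\<in>R. x s c)"
    using x(4) c by (simp add: sum.union_disjoint)
  moreover have "x s c = Us s - fs s" if "s \<in> S" for s
  proof -
    have "(\<Sum>c'\<in>{1..m}. x s c') = (\<Sum>c'\<in>{1..m}. if c' = c then x s c else 0)"
      using that x_in_cache by (intro sum.cong) (auto simp: S_def)
    then show ?thesis using x(3) c that by (simp add: S_def)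
  qed
  then have "(\<Sum>s\<in>S. x s c) = (\<Sum>s\<in>S. Us s) - (\<Sum>s\<in>S. fs s)"
    by (simp add: sum_subtractf[symmetric])
  moreover have "(\<Sum>s\<in>S. fs s) \<le> real m * u"
  proof (rule sum_le_card_support_mult[OF \<open>finite S\<close> E u])
    show "\<forall>s\<in>S. fs s \<le> u" using bounds Us by (force simp: S_def)
    show "\<forall>s\<in>S. fs s \<noteq> 0 \<longrightarrow> s \<in> E"
      using bounds by (auto simp: S_def E_def exceptional_servers_def order_less_le)
  qed
  moreover have "(\<Sum>s\<in>R. x s c) \<le> real m * u"
  proof (rule sum_le_card_support_mult[OF \<open>finite R\<close> E u])
    show "\<forall>s\<in>R. x s c \<le> u"
    proof
      fix s assume s: "s \<in> R"
      have "x s c \<le> (\<Sum>c'\<in>{1..m}. x s c')" using c x(1) by (intro member_le_sum) auto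
      with s bounds Us x(3) show "x s c \<le> u" by (force simp: R_def)
    qed
    show "\<forall>s\<in>R. x s c \<noteq> 0 \<longrightarrow> s \<in> E"
      using shared_cache_server_exceptional[OF a] x_in_cache unfolding R_def E_def by blast
  qed
  moreover have "0 \<le> (\<Sum>s\<in>S. fs s)" "0 \<le> (\<Sum>s\<in>R. x s c)"
    using bounds x(1) by (auto simp: S_def intro: sum_nonneg)
  ultimately show ?thesis unfolding S_def by linarith
qed

lemma served_total_eq:
  assumes "flow_decomposition n m Us lam (fs, ds, fc, a)"
  shows "(\<Sum>c\<in>{1..m}. lam c - fc c) = (\<Sum>s<n. Us s) - (\<Sum>s<n. fs s)"
proof -
  obtain x where x: "\<forall>s<n. Us s - fs s = (\<Sum>c\<in>{1..m}. x s c)"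
    "\<forall>c\<in>{1..m}. lam c - fc c = (\<Sum>s<n. x s c)"
    using assms unfolding flow_decomposition_def by auto
  have "(\<Sum>c\<in>{1..m}. lam c - fc c) = (\<Sum>c\<in>{1..m}. \<Sum>s<n. x s c)" using x(2) by simp
  also have "\<dots> = (\<Sum>s<n. \<Sum>c\<in>{1..m}. x s c)" by (rule sum.swap)
  also have "\<dots> = (\<Sum>s<n. Us s - fs s)" using x(1) by simp
  finally show ?thesis by (simp add: sum_subtractf)
qed

lemma final_residual_server_exceptional:
  assumes "greedy_bounds n m Us ds0 lam (fs, ds, fc, a)" and "\<not> greedy_guard n m (fs, ds, fc, a)"
    and "\<forall>s<n. 1 \<le> ds0 s" and "c0 \<in> {1..m}" "0 < fc c0" and "s < n" "0 < fs s"
  shows "s \<in> exceptional_servers n fs a"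
proof -
  have "\<not> 0 < fs s * real (ds s) * fc c0"
    using assms(2,4,6) unfolding greedy_guard_def by auto
  then have "ds s = 0" using assms(5,7) by (metis mult_pos_pos of_nat_0_less_iff neq0_conv)
  with assms(1,3,6) have "cache a s \<noteq> {}" unfolding greedy_bounds_def by fastforce
  with assms(6,7) show ?thesis by (simp add: exceptional_servers_def)
qed

lemma served_total_near_capacity:
  assumes inv: "greedy_inv n m Us ds0 lam u (fs, ds, fc, a)"
    and final: "\<not> greedy_guard n m (fs, ds, fc, a)"
    and Us: "\<forall>s<n. Us s \<le> u" and u: "0 \<le> u" and ds0: "\<forall>s<n. 1 \<le> ds0 s"
  shows "\<bar>(\<Sum>c\<in>{1..m}. lam c - fc c) - min (\<Sum>c\<in>{1..m}. lam c) (\<Sum>s<n. Us s)\<bar> \<le> real m * u"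
proof -
  have bounds: "greedy_bounds n m Us ds0 lam (fs, ds, fc, a)"
    using inv unfolding greedy_inv_def by simp
  then have fs: "\<forall>s<n. 0 \<le> fs s \<and> fs s \<le> Us s" and fc: "\<forall>c\<in>{1..m}. 0 \<le> fc c \<and> fc c \<le> lam c"
    unfolding greedy_bounds_def by simp_all
  have "flow_decomposition n m Us lam (fs, ds, fc, a)" using inv unfolding greedy_inv_def by simp
  then have total: "(\<Sum>c\<in>{1..m}. lam c - fc c) = (\<Sum>s<n. Us s) - (\<Sum>s<n. fs s)"
    by (rule served_total_eq)
  have "0 \<le> (\<Sum>s<n. fs s)" "0 \<le> (\<Sum>c\<in>{1..m}. fc c)" using fs fc by (auto intro: sum_nonneg)
  then have upper: "(\<Sum>c\<in>{1..m}. lam c - fc c) \<le> min (\<Sum>c\<in>{1..m}. lam c) (\<Sum>s<n. Us s)"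
    using total by (simp add: sum_subtractf)
  have "min (\<Sum>c\<in>{1..m}. lam c) (\<Sum>s<n. Us s) - real m * u \<le> (\<Sum>c\<in>{1..m}. lam c - fc c)"
  proof (cases "\<exists>c0\<in>{1..m}. 0 < fc c0")
    case False
    then have "\<forall>c\<in>{1..m}. fc c = 0" using fc by force
    moreover have "0 \<le> real m * u" using u by simp
    ultimately show ?thesis by (simp add: min_def)
  next
    case True
    then obtain c0 where c0: "c0 \<in> {1..m}" "0 < fc c0" by blast
    have "(\<Sum>s<n. fs s) \<le> real m * u"
    proof (rule sum_le_card_support_mult)
      show "finite (exceptional_servers n fs a)" by (simp add: exceptional_servers_def)
      show "card (exceptional_servers n fs a) \<le> m" by (rule card_exceptional_servers_le[OF inv])
      show "\<forall>s\<in>{..<n}. fs s \<le> u" using fs Us by force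
      show "\<forall>s\<in>{..<n}. fs s \<noteq> 0 \<longrightarrow> s \<in> exceptional_servers n fs a"
        using final_residual_server_exceptional[OF bounds final ds0 c0] fs
        by (auto simp: order_less_le)
    qed (use u in auto)
    then show ?thesis using total by linarith
  qed
  with upper show ?thesis by linarith
qed

lemma greedy_output_card_multi_cache:
  assumes "greedy_output n m Us ds0 lam a"
    and "\<forall>s<n. 0 \<le> Us s \<and> Us s \<le> u" "\<forall>c\<in>{1..m}. 0 \<le> lam c"
  shows "card {s. s < n \<and> 2 \<le> card (cache a s)} \<le> m"
proof -
  obtain fs ds fc where "greedy_inv n m Us ds0 lam u (fs, ds, fc, a)"
    using greedy_output_final_state[OF assms] by blast
  then show ?thesis by (rule card_multi_cache_servers_le)
qed

lemma greedy_output_single_cache_load: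
  assumes out: "greedy_output n m Us ds0 lam a"
    and Us: "\<forall>s<n. 0 \<le> Us s \<and> Us s \<le> u" and u: "0 \<le> u" and ds0: "\<forall>s<n. 1 \<le> ds0 s"
    and lam: "\<forall>c\<in>{1..m}. 0 \<le> lam c"
    and level: "c1 \<in> {1..m}" "L \<le> lam c1"
      "(\<Sum>c\<in>{1..m}. max 0 (lam c - L)) = min (\<Sum>c\<in>{1..m}. lam c) (\<Sum>s<n. Us s)"
    and c: "c \<in> {1..m}"
  shows "\<bar>(\<Sum>s | s < n \<and> cache a s = {c}. Us s) - max 0 (lam c - L)\<bar> \<le> real (3 * m + 1) * u"
proof -
  obtain fs ds fc where inv: "greedy_inv n m Us ds0 lam u (fs, ds, fc, a)"
    and final: "\<not> greedy_guard n m (fs, ds, fc, a)"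
    using greedy_output_final_state[OF out Us lam] by blast
  have Us_le: "\<forall>s<n. Us s \<le> u" using Us by simp
  have "\<forall>c\<in>{1..m}. fc c \<le> lam c" and "residuals_balanced m lam u fc"
    using inv unfolding greedy_inv_def greedy_bounds_def by simp_all
  moreover have "\<bar>(\<Sum>c\<in>{1..m}. lam c - fc c) - (\<Sum>c\<in>{1..m}. max 0 (lam c - L))\<bar> \<le> real m * u"
    using served_total_near_capacity[OF inv final Us_le u ds0] level(3) by simp
  ultimately have "\<forall>c\<in>{1..m}. \<bar>fc c - min (lam c) L\<bar> \<le> real (m + 1) * u + real m * u"
    using water_filling_stable[of "{1..m}" c1 L lam fc u "real m * u"] level(1,2) u
    unfolding residuals_balanced_def by simp
  then have "\<bar>fc c - min (lam c) L\<bar> \<le> real (m + 1) * u + real m * u" using c by blast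
  moreover have "\<bar>(lam c - fc c) - (\<Sum>s | s < n \<and> cache a s = {c}. Us s)\<bar> \<le> real m * u"
    by (rule served_near_single_cache_load[OF inv Us_le u c])
  moreover have "max 0 (lam c - L) = lam c - min (lam c) L" by (simp add: min_def max_def)
  moreover have "real (3 * m + 1) * u = real (m + 1) * u + real m * u + real m * u"
    by (simp add: algebra_simps)
  ultimately show ?thesis by linarith
qed

section \<open>The scaling limit\<close>

locale greedy_scaling =
  fixes I :: "'i set" and J :: "'j set" and U :: "'i \<Rightarrow> real" and d :: "'j \<Rightarrow> nat"
    and \<alpha> :: "'i \<Rightarrow> 'j \<Rightarrow> real" and m :: nat and lb :: "nat \<Rightarrow> real"
    and tp :: "nat \<Rightarrow> nat \<Rightarrow> 'i \<times> 'j" and alloc :: "nat \<Rightarrow> (nat \<times> nat) set"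
    and q :: "'i \<Rightarrow> 'j \<Rightarrow> nat set \<Rightarrow> real"
  assumes finite_I: "finite I" and finite_J: "finite J"
    and U_pos: "\<forall>i\<in>I. U i > 0" and d_pos: "\<forall>j\<in>J. d j \<ge> 1"
    and alpha_nonneg: "\<forall>i\<in>I. \<forall>j\<in>J. \<alpha> i j \<ge> 0"
    and alpha_sum: "(\<Sum>i\<in>I. \<Sum>j\<in>J. \<alpha> i j) = 1"
    and alpha_rat: "\<forall>i\<in>I. \<forall>j\<in>J. \<alpha> i j \<in> \<rat>"
    and lb_pos: "\<forall>c\<in>{1..m}. lb c > 0"
    and server_types: "\<forall>n. (\<forall>i\<in>I. \<forall>j\<in>J. real n * \<alpha> i j \<in> \<nat>) \<longrightarrow>
           (\<forall>s<n. tp n s \<in> I \<times> J) \<and>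
           (\<forall>i\<in>I. \<forall>j\<in>J. real (card {s. s < n \<and> tp n s = (i, j)}) = real n * \<alpha> i j)"
    and greedy: "\<forall>n. (\<forall>i\<in>I. \<forall>j\<in>J. real n * \<alpha> i j \<in> \<nat>) \<longrightarrow>
           greedy_output n m (\<lambda>s. U (fst (tp n s))) (\<lambda>s. d (snd (tp n s)))
             (\<lambda>c. real n * lb c) (alloc n)"
    and q_limit: "\<forall>i\<in>I. \<forall>j\<in>J. \<forall>K. K \<subseteq> {1..m} \<longrightarrow>
           ((\<lambda>n. cache_frac \<alpha> (tp n) (alloc n) n i j K) \<longlongrightarrow> q i j K)
             (inf sequentially (principal {n. \<forall>i\<in>I. \<forall>j\<in>J. real n * \<alpha> i j \<in> \<nat>}))"
begin

definition admissible :: "nat set" where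
  "admissible = {n. \<forall>i\<in>I. \<forall>j\<in>J. real n * \<alpha> i j \<in> \<nat>}"

definition u_max :: real where
  "u_max = Max (U ` I)"

definition capacity :: real where
  "capacity = (\<Sum>i\<in>I. \<Sum>j\<in>J. \<alpha> i j * U i)"

lemma I_nonempty: "I \<noteq> {}"
  using alpha_sum by auto

lemma U_le_u_max: "i \<in> I \<Longrightarrow> U i \<le> u_max"
  unfolding u_max_def using finite_I by simp

lemma u_max_nonneg: "0 \<le> u_max"
proof -
  obtain i where "i \<in> I" using I_nonempty by blast
  with U_pos U_le_u_max[of i] show ?thesis by force
qed

lemma capacity_pos: "0 < capacity"
proof -
  have "Min (U ` I) \<le> U i" if "i \<in> I" for i using finite_I that by simp
  then have "(\<Sum>i\<in>I. \<Sum>j\<in>J. \<alpha> i j * Min (U ` I)) \<le> capacity"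
    unfolding capacity_def using alpha_nonneg by (intro sum_mono mult_left_mono) auto
  moreover have "(\<Sum>i\<in>I. \<Sum>j\<in>J. \<alpha> i j * Min (U ` I)) = Min (U ` I)"
    using alpha_sum by (simp add: sum_distrib_right[symmetric])
  moreover have "0 < Min (U ` I)" using finite_I I_nonempty U_pos by simp
  ultimately show ?thesis by linarith
qed

lemma admissible_types:
  assumes "n \<in> admissible"
  shows "\<forall>s<n. tp n s \<in> I \<times> J"
    and "\<forall>i\<in>I. \<forall>j\<in>J. real (card {s. s < n \<and> tp n s = (i, j)}) = real n * \<alpha> i j"
  using server_types assms unfolding admissible_def by blast+

lemma admissible_greedy:
  "n \<in> admissible \<Longrightarrow>
     greedy_output n m (\<lambda>s. U (fst (tp n s))) (\<lambda>s. d (snd (tp n s))) (\<lambda>c. real n * lb c) (alloc n)"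
  using greedy unfolding admissible_def by blast

lemma admissible_multiples: "\<exists>D>0. \<forall>N. N * D \<in> admissible"
proof -
  obtain D :: nat where D: "0 < D" "\<forall>p\<in>I \<times> J. real D * \<alpha> (fst p) (snd p) \<in> \<int>"
    using Rats_common_denominator[of "I \<times> J" "\<lambda>p. \<alpha> (fst p) (snd p)"] finite_I finite_J alpha_rat
    by auto
  have "real D * \<alpha> i j \<in> \<nat>" if "i \<in> I" "j \<in> J" for i j
  proof -
    have "real D * \<alpha> i j \<in> \<int>" using D(2) that by force
    moreover have "0 \<le> real D * \<alpha> i j" using alpha_nonneg that by simp
    ultimately show ?thesis by (simp add: Nats_altdef2)
  qed
  then have "real N * (real D * \<alpha> i j) \<in> \<nat>" if "i \<in> I" "j \<in> J" for N i j
    using that by simp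
  with D(1) show ?thesis by (intro exI[of _ D]) (simp add: admissible_def mult.assoc)
qed

lemma scaling_ne_bot: "inf sequentially (principal admissible) \<noteq> bot"
proof
  assume "inf sequentially (principal admissible) = bot"
  then have "eventually (\<lambda>n. False) (inf sequentially (principal admissible))" by simp
  then have "eventually (\<lambda>n. n \<notin> admissible) sequentially"
    unfolding eventually_inf_principal by simp
  then obtain N where "\<forall>n\<ge>N. n \<notin> admissible" unfolding eventually_sequentially by blast
  moreover obtain D where "0 < D" "\<forall>N. N * D \<in> admissible" using admissible_multiples by blast
  moreover have "N \<le> N * D" using \<open>0 < D\<close> by simp
  ultimately show False by blast
qed

lemma eventually_admissible:
  "eventually (\<lambda>n. n \<in> admissible \<and> 0 < n) (inf sequentially (principal admissible))"
  unfolding eventually_inf_principal eventually_sequentially by (intro exI[of _ 1]) auto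

lemma server_bandwidth_sum:
  assumes "n \<in> admissible"
  shows "(\<Sum>s<n. U (fst (tp n s))) = real n * capacity"
proof -
  have "(\<Sum>s<n. U (fst (tp n s))) = (\<Sum>i\<in>I. \<Sum>j\<in>J. U i * real (card {s\<in>{..<n}. tp n s = (i, j)}))"
    using sum_by_type[OF finite_I finite_J, of "{..<n}" "tp n" "\<lambda>p. U (fst p)"] admissible_types(1)[OF assms]
    by simp
  also have "\<dots> = (\<Sum>i\<in>I. \<Sum>j\<in>J. U i * (real n * \<alpha> i j))"
    using admissible_types(2)[OF assms] by (intro sum.cong refl) (simp add: Collect_conj_eq lessThan_def)
  finally show ?thesis by (simp add: capacity_def sum_distrib_left mult_ac)
qed

lemma weighted_cache_frac:
  assumes "n \<in> admissible" "0 < n"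
  shows "(\<Sum>i\<in>I. \<Sum>j\<in>J. \<alpha> i j * U i * cache_frac \<alpha> (tp n) (alloc n) n i j K)
           = (\<Sum>s | s < n \<and> cache (alloc n) s = K. U (fst (tp n s))) / real n"
proof -
  define S where "S = {s. s < n \<and> cache (alloc n) s = K}"
  have "(\<Sum>s\<in>S. U (fst (tp n s))) = (\<Sum>i\<in>I. \<Sum>j\<in>J. U i * real (card {s\<in>S. tp n s = (i, j)}))"
    using sum_by_type[OF finite_I finite_J, of S "tp n" "\<lambda>p. U (fst p)"] admissible_types(1)[OF assms(1)]
    by (simp add: S_def)
  moreover have "\<alpha> i j * U i * cache_frac \<alpha> (tp n) (alloc n) n i j K
      = U i * real (card {s\<in>S. tp n s = (i, j)}) / real n" if "i \<in> I" "j \<in> J" for i j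
  proof (cases "\<alpha> i j = 0")
    case True
    txt \<open>\<open>cache_frac\<close> divides by \<open>0\<close> here, but no server has this type.\<close>
    have "card {s\<in>S. tp n s = (i, j)} \<le> card {s. s < n \<and> tp n s = (i, j)}"
      by (intro card_mono) (auto simp: S_def)
    moreover have "real (card {s. s < n \<and> tp n s = (i, j)}) = 0"
      using True that admissible_types(2)[OF assms(1)] by simp
    ultimately have "card {s\<in>S. tp n s = (i, j)} = 0" by linarith
    then show ?thesis using True by (simp add: cache_frac_def)
  next
    case False
    have "{s\<in>S. tp n s = (i, j)} = {s. s < n \<and> tp n s = (i, j) \<and> cache (alloc n) s = K}"
      by (auto simp: S_def)
    with False assms(2) show ?thesis by (simp add: cache_frac_def)
  qed
  ultimately show ?thesis by (simp add: S_def sum_divide_distrib)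
qed

lemma admissible_parameters:
  assumes "n \<in> admissible"
  shows "\<forall>s<n. 0 \<le> U (fst (tp n s)) \<and> U (fst (tp n s)) \<le> u_max"
    and "\<forall>s<n. 1 \<le> d (snd (tp n s))" and "\<forall>c\<in>{1..m}. 0 \<le> real n * lb c"
  using admissible_types(1)[OF assms] U_pos U_le_u_max d_pos lb_pos
  by (force simp: mem_Times_iff less_imp_le)+

lemma q_multi_cache_eq_zero:
  assumes ij: "i \<in> I" "j \<in> J" and K: "K \<subseteq> {1..m}" "2 \<le> card K"
  shows "q i j K = 0"
proof (rule tendsto_eq_if_dist_le_const_over_n[OF scaling_ne_bot])
  show "inf sequentially (principal admissible) \<le> sequentially" by simp
  show "((\<lambda>n. cache_frac \<alpha> (tp n) (alloc n) n i j K) \<longlongrightarrow> q i j K)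
      (inf sequentially (principal admissible))"
    using q_limit ij K unfolding admissible_def by blast
  show "eventually (\<lambda>n. \<bar>cache_frac \<alpha> (tp n) (alloc n) n i j K - 0\<bar> \<le> (real m / \<alpha> i j) / real n)
      (inf sequentially (principal admissible))"
    using eventually_admissible
  proof eventually_elim
    case (elim n)
    have "card {s. s < n \<and> tp n s = (i, j) \<and> cache (alloc n) s = K}
        \<le> card {s. s < n \<and> 2 \<le> card (cache (alloc n) s)}"
      using K(2) by (intro card_mono) auto
    also have "\<dots> \<le> m"
      using elim admissible_parameters[of n] admissible_greedy[of n]
      by (intro greedy_output_card_multi_cache) auto
    finally have "real (card {s. s < n \<and> tp n s = (i, j) \<and> cache (alloc n) s = K})
        / (real n * \<alpha> i j) \<le> real m / (real n * \<alpha> i j)"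
      using alpha_nonneg ij by (intro divide_right_mono) auto
    then show ?case using alpha_nonneg ij by (simp add: cache_frac_def mult.commute)
  qed
qed

lemma theta_eq_water_level:
  assumes c: "c \<in> {1..m}" and level: "c1 \<in> {1..m}" "L \<le> lb c1"
    "(\<Sum>c\<in>{1..m}. max 0 (lb c - L)) = min (\<Sum>c\<in>{1..m}. lb c) capacity"
  shows "(\<Sum>i\<in>I. \<Sum>j\<in>J. \<alpha> i j * U i * q i j {c}) = max 0 (lb c - L)"
proof (rule tendsto_eq_if_dist_le_const_over_n[OF scaling_ne_bot])
  show "inf sequentially (principal admissible) \<le> sequentially" by simp
  show "((\<lambda>n. \<Sum>i\<in>I. \<Sum>j\<in>J. \<alpha> i j * U i * cache_frac \<alpha> (tp n) (alloc n) n i j {c})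
      \<longlongrightarrow> (\<Sum>i\<in>I. \<Sum>j\<in>J. \<alpha> i j * U i * q i j {c})) (inf sequentially (principal admissible))"
    using q_limit c unfolding admissible_def by (intro tendsto_sum tendsto_mult_left) auto
  show "eventually (\<lambda>n. \<bar>(\<Sum>i\<in>I. \<Sum>j\<in>J. \<alpha> i j * U i * cache_frac \<alpha> (tp n) (alloc n) n i j {c})
      - max 0 (lb c - L)\<bar> \<le> real (3 * m + 1) * u_max / real n) (inf sequentially (principal admissible))"
    using eventually_admissible
  proof eventually_elim
    case (elim n)
    have scale: "max 0 (real n * x - real n * y) = real n * max 0 (x - y)" for x y
      by (simp add: max_mult_distrib_left right_diff_distrib)
    have "(\<Sum>c\<in>{1..m}. max 0 (real n * lb c - real n * L))
        = min (\<Sum>c\<in>{1..m}. real n * lb c) (\<Sum>s<n. U (fst (tp n s)))"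
      using level(3) server_bandwidth_sum[of n] elim
      by (simp add: scale sum_distrib_left[symmetric] min_mult_distrib_left)
    moreover have "real n * L \<le> real n * lb c1" using level(2) by (simp add: mult_left_mono)
    ultimately have "\<bar>(\<Sum>s | s < n \<and> cache (alloc n) s = {c}. U (fst (tp n s)))
        - real n * max 0 (lb c - L)\<bar> \<le> real (3 * m + 1) * u_max"
      using greedy_output_single_cache_load[OF admissible_greedy admissible_parameters(1)
          u_max_nonneg admissible_parameters(2,3) level(1) _ _ c, of n "real n * L"] elim
      by (simp add: scale)
    moreover have "(\<Sum>i\<in>I. \<Sum>j\<in>J. \<alpha> i j * U i * cache_frac \<alpha> (tp n) (alloc n) n i j {c})
        - max 0 (lb c - L) = ((\<Sum>s | s < n \<and> cache (alloc n) s = {c}. U (fst (tp n s)))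
        - real n * max 0 (lb c - L)) / real n"
      using weighted_cache_frac[of n "{c}"] elim by (simp add: field_simps)
    ultimately show ?case using elim by (simp add: abs_divide divide_right_mono)
  qed
qed

lemma theta_below_capacity:
  assumes "(\<Sum>c\<in>{1..m}. lb c) \<le> capacity" "c \<in> {1..m}"
  shows "(\<Sum>i\<in>I. \<Sum>j\<in>J. \<alpha> i j * U i * q i j {c}) = lb c"
proof -
  have "(\<Sum>c\<in>{1..m}. max 0 (lb c - 0)) = (\<Sum>c\<in>{1..m}. lb c)"
    using lb_pos by (intro sum.cong) auto
  moreover have "0 < lb c" using lb_pos assms(2) by blast
  ultimately show ?thesis
    using theta_eq_water_level[of c c 0] assms by (simp add: min_absorb1)
qed

lemma theta_above_capacity:
  assumes "capacity < (\<Sum>c\<in>{1..m}. lb c)"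
    and dec: "\<forall>c\<in>{1..m}. \<forall>c'\<in>{1..m}. c < c' \<longrightarrow> lb c' < lb c" and cs: "cs \<in> {1..m}"
    and "(\<Sum>c'\<in>{1..<cs}. lb c') - real (cs - 1) * lb cs < capacity"
    and "capacity \<le> (\<Sum>c'\<in>{1..cs}. lb c') - real cs * (if cs + 1 \<le> m then lb (cs + 1) else 0)"
    and c: "c \<in> {1..m}"
  shows "(\<Sum>i\<in>I. \<Sum>j\<in>J. \<alpha> i j * U i * q i j {c})
           = (if c \<le> cs then lb c - (1 / real cs) * ((\<Sum>c'\<in>{1..cs}. lb c') - capacity) else 0)"
proof -
  define L where "L = ((\<Sum>c'\<in>{1..cs}. lb c') - capacity) / real cs"
  note bracket = water_level_of_bracket[OF dec cs assms(4,5), folded L_def]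
  have "(\<Sum>i\<in>I. \<Sum>j\<in>J. \<alpha> i j * U i * q i j {c}) = max 0 (lb c - L)"
    using bracket(1,3) assms(1) cs by (intro theta_eq_water_level[OF c, of cs]) auto
  with bracket(2) c show ?thesis by (simp add: L_def)
qed

end

theorem lemma1:
  fixes I :: "'i set" and J :: "'j set" and U :: "'i \<Rightarrow> real" and d :: "'j \<Rightarrow> nat"
    and \<alpha> :: "'i \<Rightarrow> 'j \<Rightarrow> real" and m :: nat and lb :: "nat \<Rightarrow> real"
    and tp :: "nat \<Rightarrow> nat \<Rightarrow> 'i \<times> 'j" and alloc :: "nat \<Rightarrow> (nat \<times> nat) set"
    and q :: "'i \<Rightarrow> 'j \<Rightarrow> nat set \<Rightarrow> real"
  assumes "finite I" and "finite J"
    and "\<forall>i\<in>I. U i > 0" and "\<forall>j\<in>J. d j \<ge> 1"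
    and "\<forall>i\<in>I. \<forall>j\<in>J. \<alpha> i j \<ge> 0"
    and "(\<Sum>i\<in>I. \<Sum>j\<in>J. \<alpha> i j) = 1"
    and "\<forall>i\<in>I. \<forall>j\<in>J. \<alpha> i j \<in> \<rat>"
    and "\<forall>c\<in>{1..m}. lb c > 0"
    and "\<forall>n. (\<forall>i\<in>I. \<forall>j\<in>J. real n * \<alpha> i j \<in> \<nat>) \<longrightarrow>
           (\<forall>s<n. tp n s \<in> I \<times> J) \<and>
           (\<forall>i\<in>I. \<forall>j\<in>J. real (card {s. s < n \<and> tp n s = (i, j)}) = real n * \<alpha> i j)"
    and "\<forall>n. (\<forall>i\<in>I. \<forall>j\<in>J. real n * \<alpha> i j \<in> \<nat>) \<longrightarrow>
           greedy_output n m (\<lambda>s. U (fst (tp n s))) (\<lambda>s. d (snd (tp n s)))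
             (\<lambda>c. real n * lb c) (alloc n)"
    and "\<forall>i\<in>I. \<forall>j\<in>J. \<forall>K. K \<subseteq> {1..m} \<longrightarrow>
           ((\<lambda>n. cache_frac \<alpha> (tp n) (alloc n) n i j K) \<longlongrightarrow> q i j K)
             (inf sequentially (principal {n. \<forall>i\<in>I. \<forall>j\<in>J. real n * \<alpha> i j \<in> \<nat>}))"
  shows "let lbar = (\<Sum>c\<in>{1..m}. lb c);
             \<rho> = lbar / (\<Sum>i\<in>I. \<Sum>j\<in>J. \<alpha> i j * U i);
             \<theta> = (\<lambda>c. \<Sum>i\<in>I. \<Sum>j\<in>J. \<alpha> i j * U i * q i j {c});
             lbe = (\<lambda>c. if c \<le> m then lb c else 0)
         in (\<forall>i\<in>I. \<forall>j\<in>J. \<forall>K. K \<subseteq> {1..m} \<and> card K \<ge> 2 \<longrightarrow> q i j K = 0) \<and>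
            (\<rho> \<le> 1 \<longrightarrow> (\<forall>c\<in>{1..m}. \<theta> c = lb c)) \<and>
            (\<rho> > 1 \<longrightarrow> (\<forall>c\<in>{1..m}. \<forall>c'\<in>{1..m}. c < c' \<longrightarrow> lb c' < lb c) \<longrightarrow>
              (\<forall>cs\<in>{1..m}.
                 (\<Sum>c'\<in>{1..<cs}. lb c') - real (cs - 1) * lb cs < lbar / \<rho> \<and>
                 lbar / \<rho> \<le> (\<Sum>c'\<in>{1..cs}. lb c') - real cs * lbe (cs + 1) \<longrightarrow>
                 (\<forall>c\<in>{1..m}. \<theta> c = (if c \<le> cs
                     then lb c - (1 / real cs) * ((\<Sum>c'\<in>{1..cs}. lb c') - lbar / \<rho>)
                     else 0))))"
proof -
  interpret greedy_scaling I J U d \<alpha> m lb tp alloc q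
    using assms by (simp add: greedy_scaling_def)
  define lbar where "lbar = (\<Sum>c\<in>{1..m}. lb c)"
  have "lbar / capacity \<le> 1 \<longleftrightarrow> lbar \<le> capacity" "1 < lbar / capacity \<longleftrightarrow> capacity < lbar"
    using capacity_pos by (simp_all add: divide_le_eq less_divide_eq)
  moreover have "capacity < lbar \<Longrightarrow> lbar / (lbar / capacity) = capacity"
    using capacity_pos by simp
  ultimately show ?thesis
    unfolding Let_def capacity_def[symmetric] lbar_def[symmetric]
    using q_multi_cache_eq_zero theta_below_capacity[folded lbar_def]
      theta_above_capacity[folded lbar_def]
    by auto
qed

end
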